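(* Let $L_n$ and $PL_n$ be as in the context and $n\ge 4$. The homomorphism $\phi_n:L_n\to\operatorname{Aut}(PL_n)$, $\phi_n(g)(x)=g^{-1}xg$ for $x\in PL_n$, is injective.
   Context: For $n\ge 2$, $L_n=\langle y_1,\dots,y_{n-1}\mid y_j^2=1\ (1\le j\le n-1),\ y_iy_{i+1}y_i=y_{i+1}y_iy_{i+1}\ (1\le i\le n-2)\rangle$ (no relations between $y_i,y_j$ with $|i-j|\ge 2$). Let $\pi:L_n\to S_n$ be the surjective homomorphism with $\pi(y_i)=(i\ i{+}1)$, the transposition, and $PL_n=\ker\pi$ (a normal subgroup, so conjugation restricts to automorphisms of $PL_n$). *)

theory Defs
  imports "HOL-Algebra.Algebra" "HOL-Combinatorics.Transposition"
begin

text \<open>Words in the generators y_1,...,y_{n-1}: a letter i stands for y_i.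
  Since every generator is an involution (y_i^2 = 1), the group L_n is the
  monoid presented by these generators and relations; we realise it as the
  quotient of the free monoid (lists) by the congruence generated by the
  defining relations.\<close>

definition words :: "nat \<Rightarrow> nat list set" where
  "words n = {w. set w \<subseteq> {1..<n}}"

inductive eqw :: "nat \<Rightarrow> nat list \<Rightarrow> nat list \<Rightarrow> bool" for n where
  eqw_refl: "w \<in> words n \<Longrightarrow> eqw n w w"
| eqw_sym: "eqw n u v \<Longrightarrow> eqw n v u"
| eqw_trans: "eqw n u v \<Longrightarrow> eqw n v w \<Longrightarrow> eqw n u w"
| eqw_inv: "u \<in> words n \<Longrightarrow> v \<in> words n \<Longrightarrow> 1 \<le> j \<Longrightarrow> j \<le> n - 1 \<Longrightarrow>
     eqw n (u @ [j, j] @ v) (u @ v)"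
| eqw_braid: "u \<in> words n \<Longrightarrow> v \<in> words n \<Longrightarrow> 1 \<le> i \<Longrightarrow> i \<le> n - 2 \<Longrightarrow>
     eqw n (u @ [i, Suc i, i] @ v) (u @ [Suc i, i, Suc i] @ v)"

definition wrel :: "nat \<Rightarrow> (nat list \<times> nat list) set" where
  "wrel n = {(u, v). eqw n u v}"

definition L :: "nat \<Rightarrow> nat list set monoid" where
  "L n = \<lparr> partial_object.carrier = words n // wrel n,
           monoid.mult = (\<lambda>A B. wrel n `` {(SOME a. a \<in> A) @ (SOME b. b \<in> B)}),
           monoid.one = wrel n `` {[]} \<rparr>"

definition perm_of_word :: "nat list \<Rightarrow> nat \<Rightarrow> nat" where
  "perm_of_word w = foldr (\<lambda>i f. transpose i (Suc i) \<circ> f) w id"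

definition piL :: "nat \<Rightarrow> nat list set \<Rightarrow> nat \<Rightarrow> nat" where
  "piL n A = perm_of_word (SOME w. w \<in> A)"

definition PL :: "nat \<Rightarrow> nat list set set" where
  "PL n = kernel (L n) (sym_group n) (piL n)"

definition phi :: "nat \<Rightarrow> nat list set \<Rightarrow> nat list set \<Rightarrow> nat list set" where
  "phi n g = (\<lambda>x\<in>PL n. inv\<^bsub>L n\<^esub> g \<otimes>\<^bsub>L n\<^esub> x \<otimes>\<^bsub>L n\<^esub> g)"

end

theory Submission
  imports Defs "HOL-Library.Confluence"
begin

text \<open>Oriented as \<open>y\<^sub>i y\<^sub>i \<rightarrow> 1\<close> and \<open>y\<^sub>i y\<^sub>i\<^sub>+\<^sub>1 y\<^sub>i \<rightarrow> y\<^sub>i\<^sub>+\<^sub>1 y\<^sub>i y\<^sub>i\<^sub>+\<^sub>1\<close>, the defining relations of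
  \<open>L\<^sub>n\<close> form a terminating, locally confluent rewriting system on words, so every element of
  \<open>L\<^sub>n\<close> has a unique reduced word. If \<open>\<phi>\<^sub>n g = \<phi>\<^sub>n h\<close>, then \<open>g h\<^sup>-\<^sup>1\<close> commutes with \<open>PL\<^sub>n\<close>, and so
  do all its conjugates; a conjugate with the shortest reduced word \<open>w\<close> has \<open>w\<close> cyclically reduced.
  Among six pure words \<open>V = v\<^sup>1\<^sup>2\<close> in \<open>y\<^sub>1, y\<^sub>2, y\<^sub>3\<close> there is always one such that \<open>w V\<close> and
  \<open>V w\<close> are both reduced while \<open>V\<close> and \<open>w\<close> differ in their first or in their last letter. As
  \<open>w V = V w\<close> in \<open>L\<^sub>n\<close>, uniqueness of reduced words then forces \<open>w\<close> to be empty.\<close>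

section \<open>Words and the defining relations\<close>

lemma words_append [simp]: "xs @ ys \<in> words n \<longleftrightarrow> xs \<in> words n \<and> ys \<in> words n"
  by (auto simp: words_def)

lemma words_Cons [simp]: "x # xs \<in> words n \<longleftrightarrow> x \<in> {1..<n} \<and> xs \<in> words n"
  by (auto simp: words_def)

lemma words_Nil [simp]: "[] \<in> words n"
  by (simp add: words_def)

lemma words_rev [simp]: "rev w \<in> words n \<longleftrightarrow> w \<in> words n"
  by (simp add: words_def)

lemma eqw_words: "eqw n u v \<Longrightarrow> u \<in> words n \<and> v \<in> words n"
  by (induction rule: eqw.induct) auto

declare eqw_trans [trans]

lemma eqw_append_left: "eqw n u u' \<Longrightarrow> v \<in> words n \<Longrightarrow> eqw n (u @ v) (u' @ v)"
proof (induction rule: eqw.induct)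
  case (eqw_inv u w j)
  then show ?case using eqw.eqw_inv[of u n "w @ v" j] by simp
next
  case (eqw_braid u w i)
  then show ?case using eqw.eqw_braid[of u n "w @ v" i] by simp
qed (auto intro: eqw.intros)

lemma eqw_append_right: "eqw n v v' \<Longrightarrow> u \<in> words n \<Longrightarrow> eqw n (u @ v) (u @ v')"
proof (induction rule: eqw.induct)
  case (eqw_inv w x j)
  then show ?case using eqw.eqw_inv[of "u @ w" n x j] by simp
next
  case (eqw_braid w x i)
  then show ?case using eqw.eqw_braid[of "u @ w" n x i] by simp
qed (auto intro: eqw.intros)

lemma eqw_append: "eqw n u u' \<Longrightarrow> eqw n v v' \<Longrightarrow> eqw n (u @ v) (u' @ v')"
  by (meson eqw_append_left eqw_append_right eqw_trans eqw_words)

lemma eqw_in_context: "eqw n u v \<Longrightarrow> a \<in> words n \<Longrightarrow> b \<in> words n \<Longrightarrow> eqw n (a @ u @ b) (a @ v @ b)"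
  by (simp add: eqw_append eqw_refl)

lemma eqw_rev_append_self: "w \<in> words n \<Longrightarrow> eqw n (rev w @ w) []"
proof (induction w)
  case (Cons a w)
  then have "eqw n (rev w @ [a, a] @ w) (rev w @ w)"
    by (intro eqw_inv) auto
  with Cons show ?case
    by (auto intro: eqw_trans)
qed (simp add: eqw_refl)

lemma eqw_rev_append_cancel:
  "A \<in> words n \<Longrightarrow> a \<in> words n \<Longrightarrow> b \<in> words n \<Longrightarrow> eqw n (a @ rev A @ A @ b) (a @ b)"
  using eqw_in_context[OF eqw_rev_append_self] by (metis append.assoc append_Nil)

lemma eqw_append_rev_cancel:
  "A \<in> words n \<Longrightarrow> a \<in> words n \<Longrightarrow> b \<in> words n \<Longrightarrow> eqw n (a @ A @ rev A @ b) (a @ b)"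
  using eqw_rev_append_cancel[of "rev A" n a b] by simp

section \<open>A confluent rewriting system\<close>

lemma newman_measure:
  fixes f :: "'a \<Rightarrow> nat"
  assumes decreasing: "\<And>x y. r x y \<Longrightarrow> f y < f x"
    and locally_confluent: "\<And>x y z. r x y \<Longrightarrow> r x z \<Longrightarrow> \<exists>u. r\<^sup>*\<^sup>* y u \<and> r\<^sup>*\<^sup>* z u"
  shows "confluentp r"
proof (rule confluentpI)
  show "\<exists>u. r\<^sup>*\<^sup>* y u \<and> r\<^sup>*\<^sup>* z u" if "r\<^sup>*\<^sup>* x y" "r\<^sup>*\<^sup>* x z" for x y z
    using that
  proof (induction "f x" arbitrary: x y z rule: less_induct)
    case less
    show ?case
    proof (cases "x = y \<or> x = z")
      case True
      then show ?thesis using less.prems by blast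
    next
      case False
      then obtain y1 z1 where y1: "r x y1" "r\<^sup>*\<^sup>* y1 y" and z1: "r x z1" "r\<^sup>*\<^sup>* z1 z"
        using less.prems by (metis converse_rtranclpE)
      obtain u where u: "r\<^sup>*\<^sup>* y1 u" "r\<^sup>*\<^sup>* z1 u"
        using locally_confluent[OF y1(1) z1(1)] by blast
      obtain v where v: "r\<^sup>*\<^sup>* y v" "r\<^sup>*\<^sup>* u v"
        using less.hyps[OF decreasing[OF y1(1)] y1(2) u(1)] by blast
      obtain q where "r\<^sup>*\<^sup>* z q" "r\<^sup>*\<^sup>* v q"
        using less.hyps[OF decreasing[OF z1(1)] z1(2) rtranclp_trans[OF u(2) v(2)]] by blast
      with v(1) show ?thesis by (meson rtranclp_trans)
    qed
  qed
qed

inductive reduction_rule :: "nat list \<Rightarrow> nat list \<Rightarrow> bool" where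
  cancel: "reduction_rule [i, i] []"
| braid: "reduction_rule [i, Suc i, i] [Suc i, i, Suc i]"

lemma reduction_rule_words: "reduction_rule l r \<Longrightarrow> l \<in> words n \<Longrightarrow> r \<in> words n"
  by (induction rule: reduction_rule.induct) auto

lemma reduction_rule_rev: "reduction_rule l r \<Longrightarrow> rev l = l"
  by (induction rule: reduction_rule.induct) auto

inductive rstep :: "nat \<Rightarrow> nat list \<Rightarrow> nat list \<Rightarrow> bool" for n where
  rstepI: "reduction_rule l r \<Longrightarrow> x @ l @ y \<in> words n \<Longrightarrow> rstep n (x @ l @ y) (x @ r @ y)"

lemma rstep_cancel: "x @ i # i # y \<in> words n \<Longrightarrow> rstep n (x @ i # i # y) (x @ y)"
  using rstepI[OF reduction_rule.cancel, of x i y n] by simp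

lemma rstep_braid:
  "x @ i # Suc i # i # y \<in> words n \<Longrightarrow> rstep n (x @ i # Suc i # i # y) (x @ Suc i # i # Suc i # y)"
  using rstepI[OF reduction_rule.braid, of x i y n] by simp

lemma rstep_words: "rstep n w w' \<Longrightarrow> w \<in> words n \<and> w' \<in> words n"
  by (induction rule: rstep.induct) (simp add: reduction_rule_words)

lemma rstep_append:
  assumes "rstep n w w'" "a @ w @ b \<in> words n"
  shows "rstep n (a @ w @ b) (a @ w' @ b)"
  using assms by (induction rule: rstep.induct) (metis append.assoc rstepI)

lemma rsteps_append:
  assumes "(rstep n)\<^sup>*\<^sup>* w w'" "a @ w @ b \<in> words n"
  shows "(rstep n)\<^sup>*\<^sup>* (a @ w @ b) (a @ w' @ b)"
  using assms
proof (induction rule: rtranclp_induct)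
  case (step v v')
  have "a @ v @ b \<in> words n"
    using step.prems rstep_words[OF step.hyps(2)] by (simp add: words_def)
  with step show ?case by (meson rstep_append rtranclp.rtrancl_into_rtrancl)
qed simp

text \<open>Both rules lower the weight: the braid rule trades a letter \<open>i\<close> for the larger letter \<open>i + 1\<close>.\<close>

definition weight :: "nat \<Rightarrow> nat list \<Rightarrow> nat" where
  "weight n w = (\<Sum>a\<leftarrow>w. n - a)"

lemma rstep_weight: "rstep n w w' \<Longrightarrow> weight n w' < weight n w"
  by (induction rule: rstep.induct) (erule reduction_rule.cases; auto simp: weight_def words_def)

definition joinable :: "nat \<Rightarrow> nat list \<Rightarrow> nat list \<Rightarrow> bool" where
  "joinable n u v \<longleftrightarrow> (\<exists>c. (rstep n)\<^sup>*\<^sup>* u c \<and> (rstep n)\<^sup>*\<^sup>* v c)"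

lemma joinable_refl [simp]: "joinable n u u"
  unfolding joinable_def by blast

lemma joinable_sym: "joinable n u v \<Longrightarrow> joinable n v u"
  unfolding joinable_def by blast

lemma joinable_append:
  assumes "joinable n u v" "a @ u @ b \<in> words n" "a @ v @ b \<in> words n"
  shows "joinable n (a @ u @ b) (a @ v @ b)"
  using assms rsteps_append unfolding joinable_def by blast

lemma joinable_by_steps:
  "rstep n u u' \<Longrightarrow> rstep n u' c \<Longrightarrow> rstep n v v' \<Longrightarrow> rstep n v' c \<Longrightarrow> joinable n u v"
  unfolding joinable_def by (meson converse_rtranclp_into_rtranclp r_into_rtranclp)

lemma joinable_overlap_cancel_braid:
  assumes "i # i # Suc i # i # y \<in> words n"
  shows "joinable n (Suc i # i # y) (i # Suc i # i # Suc i # y)"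
proof -
  have "rstep n (i # Suc i # i # Suc i # y) (Suc i # i # Suc i # Suc i # y)"
    using rstep_braid[of "[]" i "Suc i # y" n] assms by simp
  moreover have "rstep n (Suc i # i # Suc i # Suc i # y) (Suc i # i # y)"
    using rstep_cancel[of "[Suc i, i]" "Suc i" y n] assms by simp
  ultimately show ?thesis
    unfolding joinable_def by (meson converse_rtranclp_into_rtranclp rtranclp.rtrancl_refl)
qed

lemma joinable_overlap_braid_cancel:
  assumes "i # Suc i # i # i # y \<in> words n"
  shows "joinable n (Suc i # i # Suc i # i # y) (i # Suc i # y)"
proof -
  have "rstep n (Suc i # i # Suc i # i # y) (Suc i # Suc i # i # Suc i # y)"
    using rstep_braid[of "[Suc i]" i y n] assms by simp
  moreover have "rstep n (Suc i # Suc i # i # Suc i # y) (i # Suc i # y)"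
    using rstep_cancel[of "[]" "Suc i" "i # Suc i # y" n] assms by simp
  ultimately show ?thesis
    unfolding joinable_def by (meson converse_rtranclp_into_rtranclp rtranclp.rtrancl_refl)
qed

lemma joinable_overlap_braid_braid:
  assumes "i # Suc i # i # Suc i # i # y \<in> words n"
  shows "joinable n (Suc i # i # Suc i # Suc i # i # y) (i # Suc i # Suc i # i # Suc i # y)"
proof (rule joinable_by_steps)
  show "rstep n (Suc i # i # Suc i # Suc i # i # y) (Suc i # i # i # y)"
    using rstep_cancel[of "[Suc i, i]" "Suc i" "i # y" n] assms by simp
  show "rstep n (Suc i # i # i # y) (Suc i # y)"
    using rstep_cancel[of "[Suc i]" i y n] assms by simp
  show "rstep n (i # Suc i # Suc i # i # Suc i # y) (i # i # Suc i # y)"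
    using rstep_cancel[of "[i]" "Suc i" "i # Suc i # y" n] assms by simp
  show "rstep n (i # i # Suc i # y) (Suc i # y)"
    using rstep_cancel[of "[]" i "Suc i # y" n] assms by simp
qed

lemma joinable_critical_pair:
  assumes rules: "reduction_rule l1 r1" "reduction_rule l2 r2"
    and overlap: "l1 @ y1 = t @ l2 @ y2" "length t < length l1"
    and "l1 @ y1 \<in> words n"
  shows "joinable n (r1 @ y1) (t @ r2 @ y2)"
proof -
  have "length t < 3"
    using rules(1) overlap(2) by cases auto
  then consider "t = []" | a where "t = [a]" | a b where "t = [a, b]"
    by (cases t; cases "tl t"; cases "tl (tl t)") auto
  then show ?thesis
    using rules overlap assms(5)
    by cases (elim reduction_rule.cases;
        auto intro: joinable_overlap_cancel_braid joinable_overlap_braid_cancel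
          joinable_overlap_braid_braid)+
qed

lemma joinable_redex_pair:
  assumes rules: "reduction_rule l1 r1" "reduction_rule l2 r2"
    and w: "x1 @ l1 @ y1 = x2 @ l2 @ y2" "x1 @ l1 @ y1 \<in> words n"
    and "length x1 \<le> length x2"
  shows "joinable n (x1 @ r1 @ y1) (x2 @ r2 @ y2)"
proof -
  obtain t where t: "x2 = x1 @ t" "l1 @ y1 = t @ l2 @ y2"
    using w(1) \<open>length x1 \<le> length x2\<close> by (metis append_eq_append_conv_if append_eq_conv_conj)
  have words: "x1 \<in> words n" "l1 \<in> words n" "y1 \<in> words n" "t \<in> words n" "l2 \<in> words n" "y2 \<in> words n"
    using w(2) t(2) by simp_all (metis words_append)+
  have "r1 \<in> words n" "r2 \<in> words n"
    using rules words by (simp_all add: reduction_rule_words)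
  note words = words this
  show ?thesis
  proof (cases "length t < length l1")
    case True
    then have "joinable n (r1 @ y1) (t @ r2 @ y2)"
      using joinable_critical_pair[OF rules t(2) True] w(2) by simp
    then show ?thesis
      using joinable_append[of n _ _ x1 "[]"] t(1) words by simp
  next
    case False
    then obtain m where m: "t = l1 @ m" "y1 = m @ l2 @ y2"
      using t(2) by (metis append_eq_append_conv_if append_eq_conv_conj not_le_imp_less)
    have "rstep n (x1 @ l1 @ m @ r2 @ y2) (x1 @ r1 @ m @ r2 @ y2)"
      by (rule rstepI[OF rules(1)]) (use words m in simp)
    moreover have "rstep n ((x1 @ r1 @ m) @ l2 @ y2) ((x1 @ r1 @ m) @ r2 @ y2)"
      by (rule rstepI[OF rules(2)]) (use words m in simp)
    ultimately show ?thesis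
      unfolding joinable_def using t m by (intro exI[of _ "x1 @ r1 @ m @ r2 @ y2"]) auto
  qed
qed

lemma rstep_locally_confluent: "rstep n w u \<Longrightarrow> rstep n w v \<Longrightarrow> joinable n u v"
proof (induction rule: rstep.induct)
  case (rstepI l1 r1 x1 y1)
  from rstepI.prems show ?case
  proof cases
    case (rstepI l2 r2 x2 y2)
    then show ?thesis
      using joinable_redex_pair[of l1 r1 l2 r2 x1 y1 x2 y2 n]
        joinable_redex_pair[of l2 r2 l1 r1 x2 y2 x1 y1 n] joinable_sym
        \<open>reduction_rule l1 r1\<close> \<open>x1 @ l1 @ y1 \<in> words n\<close>
      by (metis nle_le)
  qed
qed

lemma rstep_confluent: "confluentp (rstep n)"
proof (rule newman_measure)
  show "weight n w' < weight n w" if "rstep n w w'" for w w'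
    using that by (rule rstep_weight)
  show "\<exists>c. (rstep n)\<^sup>*\<^sup>* u c \<and> (rstep n)\<^sup>*\<^sup>* v c" if "rstep n w u" "rstep n w v" for w u v
    using rstep_locally_confluent[OF that] unfolding joinable_def .
qed

lemma rstep_eqw: "rstep n u v \<Longrightarrow> eqw n u v"
proof (induction rule: rstep.induct)
  case (rstepI l r x y)
  then show ?case
  proof cases
    case (cancel i)
    then show ?thesis
      using rstepI eqw_inv[of x n y i] by auto
  next
    case (braid i)
    then show ?thesis
      using rstepI eqw_braid[of x n y i] by auto
  qed
qed

lemma eqw_equivclp_rstep: "eqw n u v \<Longrightarrow> equivclp (rstep n) u v"
proof (induction rule: eqw.induct)
  case (eqw_inv u v j)
  then show ?case
    using rstep_cancel[of u j v n] by auto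
next
  case (eqw_braid u v i)
  then have "Suc i < n"
    by arith
  with eqw_braid show ?case
    using rstep_braid[of u i v n] by auto
qed (auto intro: equivclp_sym equivclp_trans)

lemma eqw_joinable: "eqw n u v \<Longrightarrow> joinable n u v"
  using eqw_equivclp_rstep semiconfluentp_equivclp[of "rstep n"] rstep_confluent
  unfolding joinable_def confluentp_eq_semiconfluentp rtranclp_conversep
  by (metis OO_def conversep_iff)

section \<open>Reduced words\<close>

fun reduced :: "nat list \<Rightarrow> bool" where
  "reduced (a # b # c # w) \<longleftrightarrow> a \<noteq> b \<and> \<not> (b = Suc a \<and> c = a) \<and> reduced (b # c # w)"
| "reduced [a, b] \<longleftrightarrow> a \<noteq> b"
| "reduced _ \<longleftrightarrow> True"

definition has_redex :: "nat list \<Rightarrow> bool" where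
  "has_redex w \<longleftrightarrow> (\<exists>x l r y. reduction_rule l r \<and> w = x @ l @ y)"

lemma reduction_rule_length: "reduction_rule l r \<Longrightarrow> 2 \<le> length l"
  by (induction rule: reduction_rule.induct) auto

lemma has_redex_length: "has_redex w \<Longrightarrow> 2 \<le> length w"
  unfolding has_redex_def by (auto dest!: reduction_rule_length)

lemma has_redex_Cons:
  "has_redex (a # w) \<longleftrightarrow> (\<exists>l r y. reduction_rule l r \<and> a # w = l @ y) \<or> has_redex w"
proof
  assume "has_redex (a # w)"
  then obtain x l r y where "reduction_rule l r" "a # w = x @ l @ y"
    unfolding has_redex_def by blast
  then show "(\<exists>l r y. reduction_rule l r \<and> a # w = l @ y) \<or> has_redex w"
    unfolding has_redex_def by (cases x) force+
next
  show "has_redex (a # w)" if "(\<exists>l r y. reduction_rule l r \<and> a # w = l @ y) \<or> has_redex w"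
    using that unfolding has_redex_def by (metis append_Cons append_Nil)
qed

lemma reduced_iff_not_has_redex: "reduced w \<longleftrightarrow> \<not> has_redex w"
proof (induction w rule: reduced.induct)
  case (1 a b c w)
  have "(\<exists>l r y. reduction_rule l r \<and> a # b # c # w = l @ y) \<longleftrightarrow> a = b \<or> (b = Suc a \<and> c = a)"
    by (auto simp: reduction_rule.simps conj_disj_distribR ex_disj_distrib)
  with 1 show ?case
    by (simp add: has_redex_Cons)
next
  case (2 a b)
  have "(\<exists>l r y. reduction_rule l r \<and> [a, b] = l @ y) \<longleftrightarrow> a = b"
    by (auto simp: reduction_rule.simps conj_disj_distribR ex_disj_distrib)
  moreover have "\<not> has_redex [b]"
    using has_redex_length by fastforce
  ultimately show ?case
    by (simp add: has_redex_Cons)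
qed (use has_redex_length in fastforce)+

lemma reduced_not_rstep: "reduced w \<Longrightarrow> \<not> rstep n w w'"
  by (auto simp: reduced_iff_not_has_redex has_redex_def elim!: rstep.cases)

lemma not_reduced_rstep: "w \<in> words n \<Longrightarrow> \<not> reduced w \<Longrightarrow> \<exists>w'. rstep n w w'"
  by (auto simp: reduced_iff_not_has_redex has_redex_def intro: rstepI)

lemma rstep_length: "rstep n w w' \<Longrightarrow> length w' \<le> length w"
  by (induction rule: rstep.induct) (auto elim: reduction_rule.cases)

lemma reduced_representative:
  "w \<in> words n \<Longrightarrow> \<exists>w'. eqw n w w' \<and> reduced w' \<and> length w' \<le> length w"
proof (induction "weight n w" arbitrary: w rule: less_induct)
  case less
  show ?case
  proof (cases "reduced w")
    case True
    with less.prems show ?thesis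
      using eqw_refl by blast
  next
    case False
    then obtain w1 where step: "rstep n w w1"
      using not_reduced_rstep less.prems by blast
    then obtain w' where "eqw n w1 w'" "reduced w'" "length w' \<le> length w1"
      using less.hyps[OF rstep_weight] rstep_words by blast
    then show ?thesis
      using rstep_eqw[OF step] rstep_length[OF step] by (meson eqw_trans le_trans)
  qed
qed

lemma eqw_reduced_eq:
  assumes "eqw n u v" "reduced u" "reduced v"
  shows "u = v"
proof -
  obtain c where "(rstep n)\<^sup>*\<^sup>* u c" "(rstep n)\<^sup>*\<^sup>* v c"
    using eqw_joinable[OF assms(1)] unfolding joinable_def by blast
  with assms(2,3) show ?thesis
    by (metis converse_rtranclpE reduced_not_rstep)
qed

lemma has_redex_rev: "has_redex w \<Longrightarrow> has_redex (rev w)"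
  unfolding has_redex_def by (metis append_assoc reduction_rule_rev rev_append)

lemma reduced_rev [simp]: "reduced (rev w) \<longleftrightarrow> reduced w"
  using has_redex_rev[of w] has_redex_rev[of "rev w"] by (auto simp: reduced_iff_not_has_redex)

lemma reduced_Cons_take: "reduced (a # w) \<longleftrightarrow> reduced w \<and> reduced (a # take 2 w)"
  by (cases w rule: reduced.cases) auto

lemma reduced_append_take: "reduced (u @ w) \<longleftrightarrow> reduced (u @ take 2 w) \<and> reduced w"
proof (induction u)
  case Nil
  then show ?case
    by (cases w rule: reduced.cases) auto
next
  case (Cons a u)
  have "take 2 (u @ take 2 w) = take 2 (u @ w)"
    by (simp add: min_def)
  with Cons show ?case
    by (metis append_Cons reduced_Cons_take)
qed

lemma reduced_append:
  "reduced (u @ w) \<longleftrightarrow> reduced u \<and> reduced w \<and> reduced (drop (length u - 2) u @ take 2 w)"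
proof -
  have "reduced (u @ take 2 w) \<longleftrightarrow> reduced (rev (take 2 w) @ take 2 (rev u)) \<and> reduced u"
    using reduced_append_take[of "rev (take 2 w)" "rev u"] reduced_rev[of "u @ take 2 w"] by simp
  also have "\<dots> \<longleftrightarrow> reduced (drop (length u - 2) u @ take 2 w) \<and> reduced u"
    using reduced_rev[of "drop (length u - 2) u @ take 2 w"] by (simp add: take_rev)
  finally show ?thesis
    using reduced_append_take[of u w] by blast
qed

definition cyclically_reduced :: "nat list \<Rightarrow> bool" where
  "cyclically_reduced w \<longleftrightarrow> reduced w \<and> (2 \<le> length w \<longrightarrow> hd w \<noteq> last w)"

section \<open>The group \<open>L\<^sub>n\<close> and its pure elements\<close>

definition cls :: "nat \<Rightarrow> nat list \<Rightarrow> nat list set" where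
  "cls n w = wrel n `` {w}"

lemma equiv_wrel: "equiv (words n) (wrel n)"
proof (rule equivI)
  show "wrel n \<subseteq> words n \<times> words n"
    unfolding wrel_def by (auto dest: eqw_words)
  show "refl_on (words n) (wrel n)"
    unfolding refl_on_def wrel_def by (simp add: eqw_refl)
  show "sym (wrel n)"
    unfolding sym_def wrel_def by (simp add: eqw_sym)
  show "trans (wrel n)"
    unfolding trans_def wrel_def by (blast intro: eqw_trans)
qed

lemma cls_eq_iff: "u \<in> words n \<Longrightarrow> v \<in> words n \<Longrightarrow> cls n u = cls n v \<longleftrightarrow> eqw n u v"
  unfolding cls_def using eq_equiv_class_iff[OF equiv_wrel] by (simp add: wrel_def)

lemma cls_in_carrier: "w \<in> words n \<Longrightarrow> cls n w \<in> carrier (L n)"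
  unfolding cls_def L_def by (auto simp: quotient_def)

lemma carrier_L_cases:
  assumes "A \<in> carrier (L n)"
  obtains w where "w \<in> words n" "A = cls n w"
  using assms unfolding cls_def L_def by (auto simp: quotient_def)

lemma eqw_some_in_cls: "w \<in> words n \<Longrightarrow> eqw n w (SOME a. a \<in> cls n w)"
  using someI[of "\<lambda>a. a \<in> cls n w" w] by (simp add: cls_def wrel_def eqw_refl)

lemma mult_cls:
  assumes "u \<in> words n" "v \<in> words n"
  shows "cls n u \<otimes>\<^bsub>L n\<^esub> cls n v = cls n (u @ v)"
proof -
  have "eqw n ((SOME a. a \<in> cls n u) @ (SOME b. b \<in> cls n v)) (u @ v)"
    using eqw_append[OF eqw_sym[OF eqw_some_in_cls] eqw_sym[OF eqw_some_in_cls]] assms .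
  then have "cls n ((SOME a. a \<in> cls n u) @ (SOME b. b \<in> cls n v)) = cls n (u @ v)"
    using cls_eq_iff eqw_words by metis
  then show ?thesis
    by (simp add: L_def cls_def)
qed

lemma one_cls: "\<one>\<^bsub>L n\<^esub> = cls n []"
  by (simp add: L_def cls_def)

lemma group_L: "group (L n)"
proof (rule groupI)
  show "x \<otimes>\<^bsub>L n\<^esub> y \<in> carrier (L n)" if "x \<in> carrier (L n)" "y \<in> carrier (L n)" for x y
    using that by (auto simp: mult_cls cls_in_carrier elim!: carrier_L_cases)
  show "\<one>\<^bsub>L n\<^esub> \<in> carrier (L n)"
    by (simp add: one_cls cls_in_carrier)
  show "x \<otimes>\<^bsub>L n\<^esub> y \<otimes>\<^bsub>L n\<^esub> z = x \<otimes>\<^bsub>L n\<^esub> (y \<otimes>\<^bsub>L n\<^esub> z)"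
    if "x \<in> carrier (L n)" "y \<in> carrier (L n)" "z \<in> carrier (L n)" for x y z
    using that by (auto simp: mult_cls elim!: carrier_L_cases)
  show "\<one>\<^bsub>L n\<^esub> \<otimes>\<^bsub>L n\<^esub> x = x" if "x \<in> carrier (L n)" for x
    using that by (auto simp: mult_cls one_cls elim!: carrier_L_cases)
  show "\<exists>y\<in>carrier (L n). y \<otimes>\<^bsub>L n\<^esub> x = \<one>\<^bsub>L n\<^esub>" if x: "x \<in> carrier (L n)" for x
  proof -
    obtain w where w: "w \<in> words n" "x = cls n w"
      using x by (rule carrier_L_cases)
    then have "cls n (rev w) \<otimes>\<^bsub>L n\<^esub> x = \<one>\<^bsub>L n\<^esub>"
      by (simp add: mult_cls one_cls cls_eq_iff eqw_rev_append_self)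
    with w show ?thesis
      using cls_in_carrier words_rev by blast
  qed
qed

lemma perm_of_word_append: "perm_of_word (u @ v) = perm_of_word u \<circ> perm_of_word v"
  unfolding perm_of_word_def by (induction u) auto

lemma perm_of_word_Nil [simp]: "perm_of_word [] = id"
  by (simp add: perm_of_word_def)

lemma perm_of_word_Cons: "perm_of_word (a # w) = transpose a (Suc a) \<circ> perm_of_word w"
  by (simp add: perm_of_word_def)

lemma perm_of_word_fixes: "x \<notin> set w \<Longrightarrow> x \<notin> Suc ` set w \<Longrightarrow> perm_of_word w x = x"
  by (induction w) (auto simp: perm_of_word_def)

lemma eqw_perm_of_word: "eqw n u v \<Longrightarrow> perm_of_word u = perm_of_word v"
proof (induction rule: eqw.induct)
  case (eqw_inv u v j)
  then show ?case
    by (simp add: perm_of_word_append perm_of_word_Cons comp_assoc)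
next
  case (eqw_braid u v i)
  have "perm_of_word [i, Suc i, i] = perm_of_word [Suc i, i, Suc i]"
    by (auto simp: perm_of_word_def fun_eq_iff transpose_def)
  then show ?case
    by (simp only: perm_of_word_append)
qed auto

lemma perm_of_word_rev: "perm_of_word (rev w) \<circ> perm_of_word w = id"
proof (induction w)
  case (Cons a w)
  then show ?case
    by (simp add: perm_of_word_append perm_of_word_Cons fun_eq_iff)
qed simp

lemma cls_in_PL: "x \<in> words n \<Longrightarrow> perm_of_word x = id \<Longrightarrow> cls n x \<in> PL n"
  using eqw_perm_of_word[OF eqw_some_in_cls, of x n]
  by (simp add: PL_def kernel_def cls_in_carrier piL_def sym_group_one cls_def[symmetric])

section \<open>Test words\<close>

text \<open>Each \<open>v\<^sup>1\<^sup>2\<close> is pure because 12 is the exponent of \<open>S\<^sub>4\<close>; only the letters 1, 2, 3 occur,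
  which is where \<open>n \<ge> 4\<close> enters.\<close>

definition test_words :: "nat list list" where
  "test_words = map (\<lambda>v. concat (replicate 12 v))
     [[1, 3, 2], [2, 3, 1], [1, 3], [3, 1], [2, 3, 1, 3], [3, 1, 3, 2]]"

lemma test_word_reduced: "V \<in> set test_words \<Longrightarrow> reduced V"
  by (auto simp: test_words_def numeral_eq_Suc)

lemma test_word_length: "V \<in> set test_words \<Longrightarrow> 2 \<le> length V"
  by (auto simp: test_words_def numeral_eq_Suc)

lemma test_word_words: "V \<in> set test_words \<Longrightarrow> 4 \<le> n \<Longrightarrow> V \<in> words n"
  by (auto simp: test_words_def words_def)

lemma test_word_pure: "V \<in> set test_words \<Longrightarrow> perm_of_word V = id"
proof
  fix x
  assume V: "V \<in> set test_words"
  show "perm_of_word V x = id x"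
  proof (cases "x \<in> {1, 2, 3, 4}")
    case True
    with V show ?thesis
      by (auto simp: test_words_def numeral_eq_Suc perm_of_word_def transpose_def)
  next
    case False
    with V show ?thesis
      by (auto simp: test_words_def intro!: perm_of_word_fixes)
  qed
qed

text \<open>By \<open>reduced_append\<close>, only the two outermost letters on each side of a test word
  matter when it is attached to another word.\<close>

lemma bex_test_words_ends:
  "(\<exists>V\<in>set test_words. P (take 2 V) (drop (length V - 2) V)) \<longleftrightarrow>
     P [1, 3] [3, 2] \<or> P [2, 3] [3, 1] \<or> P [1, 3] [1, 3] \<or> P [3, 1] [3, 1] \<or>
     P [2, 3] [1, 3] \<or> P [3, 1] [3, 2]"
  by (simp add: test_words_def numeral_eq_Suc)

lemma test_word_between:
  assumes "length e = 2" "length s = 2" "reduced e" "reduced s" "0 \<notin> set e" "0 \<notin> set s"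
    "last e \<noteq> hd s"
  shows "\<exists>V\<in>set test_words. reduced (e @ take 2 V) \<and> reduced (drop (length V - 2) V @ s)
    \<and> (hd (take 2 V) \<noteq> hd s \<or> last (drop (length V - 2) V) \<noteq> last e)"
proof -
  obtain m l f r where ends: "e = [m, l]" "s = [f, r]"
    using assms(1,2) by (auto simp: numeral_eq_Suc length_Suc_conv)
  with assms(3-7) have "0 < m" "0 < l" "0 < f" "0 < r" "m \<noteq> l" "f \<noteq> r" "f \<noteq> l"
    by auto
  then show ?thesis
    unfolding bex_test_words_ends[of "\<lambda>t d. reduced (e @ t) \<and> reduced (d @ s)
      \<and> (hd t \<noteq> hd s \<or> last d \<noteq> last e)"]
    unfolding ends
    by (cases "l = 1"; cases "l = 2"; cases "l = 3") (auto simp: numeral_eq_Suc)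
qed

lemma test_word_beside_letter:
  assumes "0 < f"
  shows "\<exists>V\<in>set test_words. reduced (f # take 2 V) \<and> reduced (drop (length V - 2) V @ [f])
    \<and> (hd (take 2 V) \<noteq> f \<or> last (drop (length V - 2) V) \<noteq> f)"
  unfolding bex_test_words_ends[of "\<lambda>t d. reduced (f # t) \<and> reduced (d @ [f])
    \<and> (hd t \<noteq> f \<or> last d \<noteq> f)"]
  using assms by (cases "f = 1"; cases "f = 2") (auto simp: numeral_eq_Suc)

lemma exists_test_word:
  assumes "w \<noteq> []" "0 \<notin> set w" "cyclically_reduced w"
  shows "\<exists>V\<in>set test_words. reduced (w @ V) \<and> reduced (V @ w) \<and> (hd V \<noteq> hd w \<or> last V \<noteq> last w)"
proof -
  have reduced_w: "reduced w"
    using assms(3) by (simp add: cyclically_reduced_def)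
  have "\<exists>V\<in>set test_words. reduced (drop (length w - 2) w @ take 2 V)
      \<and> reduced (drop (length V - 2) V @ take 2 w)
      \<and> (hd (take 2 V) \<noteq> hd w \<or> last (drop (length V - 2) V) \<noteq> last w)"
  proof (cases "length w = 1")
    case True
    then obtain f where "w = [f]"
      by (auto simp: length_Suc_conv)
    with assms(2) show ?thesis
      using test_word_beside_letter[of f] by simp
  next
    case False
    let ?e = "drop (length w - 2) w" and ?s = "take 2 w"
    have long: "2 \<le> length w"
      using False assms(1) by (cases w) (auto simp: Suc_le_eq)
    have "reduced ?e" "reduced ?s"
      using reduced_w reduced_append[of "take (length w - 2) w" ?e] reduced_append[of ?s "drop 2 w"]
      by simp_all
    moreover have "length ?e = 2" "length ?s = 2"
      using long by simp_all
    moreover have "0 \<notin> set ?e" "0 \<notin> set ?s"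
      using assms(2) by (auto dest: in_set_dropD in_set_takeD)
    moreover have "hd ?s = hd w" "last ?e = last w"
      using assms(1) by simp_all
    moreover have "hd w \<noteq> last w"
      using assms(3) long by (simp add: cyclically_reduced_def)
    ultimately show ?thesis
      using test_word_between[of ?e ?s] by simp
  qed
  then obtain V where V: "V \<in> set test_words" "reduced (drop (length w - 2) w @ take 2 V)"
    "reduced (drop (length V - 2) V @ take 2 w)"
    "hd (take 2 V) \<noteq> hd w \<or> last (drop (length V - 2) V) \<noteq> last w"
    by blast
  moreover have "hd (take 2 V) = hd V" "last (drop (length V - 2) V) = last V"
    using test_word_length[OF V(1)] by simp_all
  ultimately show ?thesis
    using reduced_w test_word_reduced[OF V(1)]
    by (auto simp: reduced_append[of w] reduced_append[of _ w])
qed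

section \<open>The centralizer of \<open>PL\<^sub>n\<close>\<close>

definition commutes_with_pure :: "nat \<Rightarrow> nat list \<Rightarrow> bool" where
  "commutes_with_pure n c \<longleftrightarrow>
     c \<in> words n \<and> (\<forall>x\<in>words n. perm_of_word x = id \<longrightarrow> eqw n (c @ x) (x @ c))"

lemma commutes_with_pure_eqw:
  assumes "commutes_with_pure n d" "eqw n c d"
  shows "commutes_with_pure n c"
  unfolding commutes_with_pure_def
proof (intro conjI ballI impI)
  show "c \<in> words n"
    using eqw_words[OF assms(2)] by blast
  fix x
  assume x: "x \<in> words n" "perm_of_word x = id"
  have "eqw n (c @ x) (d @ x)"
    using eqw_append_left[OF assms(2) x(1)] .
  also have "eqw n (d @ x) (x @ d)"
    using assms(1) x unfolding commutes_with_pure_def by blast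
  also have "eqw n (x @ d) (x @ c)"
    using eqw_append_right[OF eqw_sym[OF assms(2)] x(1)] .
  finally show "eqw n (c @ x) (x @ c)" .
qed

lemma commutes_with_pure_conj:
  assumes c: "commutes_with_pure n c" and A: "A \<in> words n"
  shows "commutes_with_pure n (A @ c @ rev A)"
  unfolding commutes_with_pure_def
proof (intro conjI ballI impI)
  have c_words: "c \<in> words n"
    using c commutes_with_pure_def by blast
  then show "A @ c @ rev A \<in> words n"
    using A by simp
  fix x
  assume x: "x \<in> words n" "perm_of_word x = id"
  let ?x' = "rev A @ x @ A"
  have "?x' \<in> words n" "perm_of_word ?x' = id"
    using x A perm_of_word_rev[of A] by (auto simp: perm_of_word_append)
  then have commute: "eqw n (c @ ?x') (?x' @ c)"
    using c commutes_with_pure_def by blast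
  have "eqw n ((A @ c @ rev A) @ x) (A @ c @ rev A @ x @ A @ rev A)"
    using eqw_sym[OF eqw_append_rev_cancel[OF A, of "A @ c @ rev A @ x" "[]"]] A c_words x by simp
  also have "eqw n (A @ c @ rev A @ x @ A @ rev A) (A @ (?x' @ c) @ rev A)"
    using eqw_in_context[OF commute A, of "rev A"] A by simp
  also have "eqw n (A @ (?x' @ c) @ rev A) (x @ (A @ c @ rev A))"
    using eqw_append_rev_cancel[OF A, of "[]" "x @ A @ c @ rev A"] A c_words x by simp
  finally show "eqw n ((A @ c @ rev A) @ x) (x @ (A @ c @ rev A))" .
qed

lemma conj_eqw_Nil:
  assumes "A \<in> words n" "c \<in> words n" "eqw n (A @ c @ rev A) []"
  shows "eqw n c []"
proof -
  have "eqw n c (rev A @ A @ c)"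
    using eqw_sym[OF eqw_rev_append_cancel[OF assms(1), of "[]" c]] assms(2) by simp
  also have "eqw n (rev A @ A @ c) (rev A @ (A @ c @ rev A) @ A)"
    using eqw_sym[OF eqw_rev_append_cancel[OF assms(1), of "rev A @ A @ c" "[]"]] assms(1,2) by simp
  also have "eqw n (rev A @ (A @ c @ rev A) @ A) (rev A @ [] @ A)"
    using eqw_in_context[OF assms(3)] assms(1) by simp
  also have "eqw n (rev A @ [] @ A) []"
    using eqw_rev_append_self[OF assms(1)] by simp
  finally show ?thesis .
qed

lemma minimal_conjugate_exists:
  assumes "c \<in> words n"
  obtains A w where "A \<in> words n" "reduced w" "eqw n w (A @ c @ rev A)"
    "\<And>A' w'. A' \<in> words n \<Longrightarrow> reduced w' \<Longrightarrow> eqw n w' (A' @ c @ rev A') \<Longrightarrow> length w \<le> length w'"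
proof -
  let ?conjugate = "\<lambda>(A, w). A \<in> words n \<and> reduced w \<and> eqw n w (A @ c @ rev A)"
  obtain w0 where "eqw n c w0" "reduced w0"
    using reduced_representative[OF assms] by blast
  then have "?conjugate ([], w0)"
    by (simp add: eqw_sym)
  then obtain p where "?conjugate p" "\<And>q. ?conjugate q \<Longrightarrow> length (snd p) \<le> length (snd q)"
    using ex_has_least_nat[of ?conjugate _ "\<lambda>p. length (snd p)"] by blast
  then show thesis
    using that[of "fst p" "snd p"] by (cases p) fastforce
qed

lemma minimal_conjugate_cyclically_reduced:
  assumes "A \<in> words n" "reduced w" "eqw n w (A @ c @ rev A)"
    and minimal: "\<And>A' w'. A' \<in> words n \<Longrightarrow> reduced w' \<Longrightarrow> eqw n w' (A' @ c @ rev A') \<Longrightarrow>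
      length w \<le> length w'"
  shows "cyclically_reduced w"
proof (rule ccontr)
  assume "\<not> cyclically_reduced w"
  with assms(2) have "2 \<le> length w" "hd w = last w"
    by (auto simp: cyclically_reduced_def)
  then obtain x u where w: "w = x # u @ [x]"
    by (cases w; cases "tl w" rule: rev_exhaust) auto
  have words: "A \<in> words n" "c \<in> words n" "x # u @ [x] \<in> words n"
    using assms(1) eqw_words[OF assms(3)] w by auto
  have "eqw n u ([x, x] @ u)"
    using eqw_sym[OF eqw_append_rev_cancel[of "[x]" n "[]" u]] words by simp
  also have "eqw n ([x, x] @ u) ([x, x] @ u @ [x, x])"
    using eqw_append_right[OF eqw_sym[OF eqw_append_rev_cancel[of "[x]" n u "[]"]], of "[x, x]"] words
    by simp
  also have "eqw n ([x, x] @ u @ [x, x]) ([x] @ (A @ c @ rev A) @ [x])"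
    using eqw_in_context[OF assms(3)[unfolded w], of "[x]" "[x]"] words by simp
  finally have "eqw n u ((x # A) @ c @ rev (x # A))"
    by simp
  moreover obtain u' where "eqw n u u'" "reduced u'" "length u' \<le> length u"
    using reduced_representative[of u n] words by auto
  ultimately have "length w \<le> length u'"
    using minimal[of "x # A" u'] words by (meson eqw_sym eqw_trans words_Cons words_append)
  with \<open>length u' \<le> length u\<close> w show False
    by simp
qed

lemma cyclically_reduced_commutes_with_pure_Nil:
  assumes "4 \<le> n" "commutes_with_pure n w" "cyclically_reduced w"
  shows "w = []"
proof (rule ccontr)
  assume "w \<noteq> []"
  moreover have "0 \<notin> set w"
    using assms(2) by (auto simp: commutes_with_pure_def words_def)
  ultimately obtain V where V: "V \<in> set test_words" "reduced (w @ V)" "reduced (V @ w)"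
    "hd V \<noteq> hd w \<or> last V \<noteq> last w"
    using exists_test_word assms(3) by blast
  have "V \<noteq> []"
    using V(1) by (auto simp: test_words_def)
  have "eqw n (w @ V) (V @ w)"
    using assms(1,2) V(1) test_word_words test_word_pure by (simp add: commutes_with_pure_def)
  then have "w @ V = V @ w"
    using eqw_reduced_eq V(2,3) by blast
  then have "hd (w @ V) = hd (V @ w)" "last (w @ V) = last (V @ w)"
    by simp_all
  with \<open>w \<noteq> []\<close> \<open>V \<noteq> []\<close> have "hd V = hd w" "last V = last w"
    by simp_all
  with V(4) show False
    by blast
qed

lemma commutes_with_pure_eqw_Nil:
  assumes "4 \<le> n" "commutes_with_pure n c"
  shows "eqw n c []"
proof -
  have c: "c \<in> words n"
    using assms(2) commutes_with_pure_def by blast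
  obtain A w where conj: "A \<in> words n" "reduced w" "eqw n w (A @ c @ rev A)"
    and minimal: "\<And>A' w'. A' \<in> words n \<Longrightarrow> reduced w' \<Longrightarrow> eqw n w' (A' @ c @ rev A') \<Longrightarrow>
      length w \<le> length w'"
    by (rule minimal_conjugate_exists[OF c]) blast
  have "commutes_with_pure n w"
    using commutes_with_pure_eqw[OF commutes_with_pure_conj[OF assms(2) conj(1)] conj(3)] .
  moreover have "cyclically_reduced w"
    using minimal_conjugate_cyclically_reduced[OF conj minimal] .
  ultimately have "w = []"
    using cyclically_reduced_commutes_with_pure_Nil assms(1) by blast
  with conj show ?thesis
    using conj_eqw_Nil[OF conj(1) c] eqw_sym by auto
qed

lemma centralizer_PL_trivial:
  assumes "4 \<le> n" "c \<in> carrier (L n)"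
    and commute: "\<And>x. x \<in> PL n \<Longrightarrow> c \<otimes>\<^bsub>L n\<^esub> x = x \<otimes>\<^bsub>L n\<^esub> c"
  shows "c = \<one>\<^bsub>L n\<^esub>"
proof -
  obtain C where C: "C \<in> words n" "c = cls n C"
    using assms(2) by (rule carrier_L_cases)
  have "commutes_with_pure n C"
    unfolding commutes_with_pure_def
  proof (intro conjI ballI impI)
    fix x
    assume "x \<in> words n" "perm_of_word x = id"
    with C show "eqw n (C @ x) (x @ C)"
      using commute[OF cls_in_PL] by (simp add: mult_cls cls_eq_iff)
  qed (rule C(1))
  then show ?thesis
    using commutes_with_pure_eqw_Nil[OF assms(1)] C by (simp add: one_cls cls_eq_iff)
qed

lemma (in group) inj_on_conjugation_if_trivial_centralizer:
  assumes "S \<subseteq> carrier G"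
    and trivial: "\<And>c. c \<in> carrier G \<Longrightarrow> (\<And>x. x \<in> S \<Longrightarrow> c \<otimes> x = x \<otimes> c) \<Longrightarrow> c = \<one>"
  shows "inj_on (\<lambda>g. \<lambda>x\<in>S. inv g \<otimes> x \<otimes> g) (carrier G)"
proof (rule inj_onI)
  fix g h
  assume g: "g \<in> carrier G" and h: "h \<in> carrier G"
    and eq: "(\<lambda>x\<in>S. inv g \<otimes> x \<otimes> g) = (\<lambda>x\<in>S. inv h \<otimes> x \<otimes> h)"
  have "g \<otimes> inv h = \<one>"
  proof (rule trivial)
    fix x
    assume x: "x \<in> S"
    then have x_carrier: "x \<in> carrier G"
      using assms(1) by blast
    have "g \<otimes> inv h \<otimes> x = g \<otimes> (inv h \<otimes> x \<otimes> h) \<otimes> inv h"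
      using g h x_carrier by (simp add: m_assoc)
    also have "\<dots> = g \<otimes> (inv g \<otimes> x \<otimes> g) \<otimes> inv h"
      using fun_cong[OF eq, of x] x by simp
    also have "\<dots> = x \<otimes> (g \<otimes> inv h)"
      using g h x_carrier by (simp add: m_assoc[symmetric])
    finally show "g \<otimes> inv h \<otimes> x = x \<otimes> (g \<otimes> inv h)" .
  qed (use g h in simp)
  then show "g = h"
    using g h by (metis inv_closed inv_equality inv_inv)
qed

theorem theorem5p4:
  fixes n :: nat
  assumes "n \<ge> 4"
  shows "inj_on (phi n) (carrier (L n))"
proof -
  interpret L: group "L n"
    by (rule group_L)
  have "PL n \<subseteq> carrier (L n)"
    by (auto simp: PL_def kernel_def)
  then show ?thesis
    unfolding phi_def[abs_def]
    using L.inj_on_conjugation_if_trivial_centralizer centralizer_PL_trivial[OF assms] by blast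
qed

end
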